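(* Let $m\ge 1$, and let $\ell_0,\ldots,\ell_{m-1}$ be $m$ distinct lines in the plane passing through a common point $x$, dividing the plane into $2m$ open sectors. Let $P=\{p_0,\ldots,p_{2m-1}\}$ consist of $2m$ points, one from each sector, listed in circular order around $x$. Then, among the $\binom{2m}{3}$ triangles with vertices in $P$, at least $\frac{(m+1)m(m-1)}{3}$ contain $x$. Moreover, if no two points of $P$ are collinear with $x$, exactly $\frac{(m+1)m(m-1)}{3}$ of them contain $x$.
   Context: A triangle with vertices in $P$ is the closed convex hull of a $3$-element subset of $P$. *)

theory Defs
  imports "HOL-Analysis.Analysis"
begin

definition line_through :: "real^2 \<Rightarrow> (real^2) set \<Rightarrow> bool" where
  "line_through x l \<longleftrightarrow> (\<exists>d. d \<noteq> 0 \<and> l = range (\<lambda>t. x + t *\<^sub>R d))"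

definition triangles_containing :: "(real^2) set \<Rightarrow> real^2 \<Rightarrow> (real^2) set set" where
  "triangles_containing P x = {T. T \<subseteq> P \<and> card T = 3 \<and> x \<in> convex hull T}"

end

theory Submission
  imports Defs
begin

text \<open>Call \<open>q\<close> a successor of \<open>p\<close> if \<open>q\<close> lies strictly counterclockwise from \<open>p\<close>, within a
  half-turn, as seen from \<open>x\<close>; breaking ties between points collinear with \<open>x\<close> arbitrarily
  turns \<open>P\<close> into a tournament. A cyclically oriented triple winds around \<open>x\<close>, so it spans a
  triangle containing \<open>x\<close>, and in general position these are the only such triangles. Since the
  \<open>2m\<close> points lie one in each sector, each line through \<open>x\<close> and a point \<open>p\<close> of \<open>P\<close> has at
  least \<open>m - 1\<close> points of \<open>P\<close> strictly on each side, so every score of the tournament is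
  \<open>m - 1\<close> or \<open>m\<close>. A tournament on \<open>2m\<close> vertices with these scores has
  \<open>C(2m, 3) - \<Sum>\<^sub>p C(score p, 2) = (m + 1) m (m - 1) / 3\<close> cyclic triples.\<close>

section \<open>Cross products in the plane\<close>

definition cross2 :: "real^2 \<Rightarrow> real^2 \<Rightarrow> real" where
  "cross2 a b = a$1 * b$2 - a$2 * b$1"

definition perp :: "real^2 \<Rightarrow> real^2" where
  "perp a = vector [- a$2, a$1]"

lemma cross2_add_right [simp]: "cross2 a (b + c) = cross2 a b + cross2 a c"
  and cross2_diff_right: "cross2 a (b - c) = cross2 a b - cross2 a c"
  and cross2_scaleR_right [simp]: "cross2 a (t *\<^sub>R b) = t * cross2 a b"
  and cross2_scaleR_left [simp]: "cross2 (t *\<^sub>R a) b = t * cross2 a b"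
  and cross2_minus_right [simp]: "cross2 a (- b) = - cross2 a b"
  and cross2_minus_left [simp]: "cross2 (- a) b = - cross2 a b"
  and cross2_self [simp]: "cross2 a a = 0"
  and cross2_zero_left [simp]: "cross2 0 a = 0"
  and cross2_zero_right [simp]: "cross2 a 0 = 0"
  by (auto simp: cross2_def algebra_simps)

lemma cross2_commute: "cross2 b a = - cross2 a b"
  by (simp add: cross2_def)

lemma vec2_eq_0_iff: "(u::real^2) = 0 \<longleftrightarrow> u$1 = 0 \<and> u$2 = 0"
  by (auto simp: vec_eq_iff forall_2)

lemma cross2_eq_inner_perp: "cross2 a v = perp a \<bullet> v"
  by (simp add: cross2_def perp_def inner_vec_def sum_2)

lemma perp_eq_0_iff [simp]: "perp a = 0 \<longleftrightarrow> a = 0"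
  by (auto simp: vec2_eq_0_iff perp_def)

lemma cross2_perp_pos: "a \<noteq> 0 \<Longrightarrow> 0 < cross2 a (perp a)"
  by (auto simp: vec2_eq_0_iff cross2_def perp_def simp flip: power2_eq_square
      intro: add_pos_nonneg add_nonneg_pos)

lemma cross2_eq_0_imp_parallel:
  assumes "u \<noteq> 0" "cross2 u v = 0"
  shows "\<exists>t. v = t *\<^sub>R u"
proof (cases "u$1 = 0")
  case True
  with assms have "u$2 \<noteq> 0" by (simp add: vec2_eq_0_iff)
  with True assms(2) have "v = (v$2 / u$2) *\<^sub>R u"
    by (auto simp: vec_eq_iff forall_2 cross2_def field_simps)
  then show ?thesis ..
next
  case False
  with assms(2) have "v = (v$1 / u$1) *\<^sub>R u"
    by (auto simp: vec_eq_iff forall_2 cross2_def field_simps)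
  then show ?thesis ..
qed

lemma cross2_eq_0_trans:
  assumes "v \<noteq> 0" "cross2 a v = 0" "cross2 b v = 0"
  shows "cross2 a b = 0"
proof -
  obtain s t where "a = s *\<^sub>R v" "b = t *\<^sub>R v"
    using cross2_eq_0_imp_parallel[of v a] cross2_eq_0_imp_parallel[of v b] assms
    by (metis cross2_commute neg_equal_0_iff_equal)
  then show ?thesis by simp
qed

lemma cross2_cyclic_identity: "cross2 b c *\<^sub>R a + cross2 c a *\<^sub>R b + cross2 a b *\<^sub>R c = 0"
  by (simp add: vec_eq_iff forall_2 cross2_def algebra_simps)

lemma line_eq_cross2_eq_0:
  assumes "d \<noteq> 0"
  shows "range (\<lambda>t. x + t *\<^sub>R d) = {v. cross2 d (v - x) = 0}"
proof (intro set_eqI iffI)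
  fix v assume "v \<in> {v. cross2 d (v - x) = 0}"
  then obtain t where "v - x = t *\<^sub>R d" using cross2_eq_0_imp_parallel[OF assms] by auto
  then have "v = x + t *\<^sub>R d" by (simp add: algebra_simps)
  then show "v \<in> range (\<lambda>t. x + t *\<^sub>R d)" by blast
qed (auto simp: cross2_diff_right)

lemma collinear_if_cross2_eq_0:
  assumes "cross2 (p - x) (q - x) = 0"
  shows "collinear {x, p, q}"
proof (cases "p = x")
  case False
  then obtain t where "q - x = t *\<^sub>R (p - x)"
    using cross2_eq_0_imp_parallel assms by fastforce
  then have "collinear {0, p - x, q - x}" by (auto simp: collinear_lemma)
  then show ?thesis using collinear_3[of p x q] by (simp add: insert_commute)
qed (simp add: collinear_2)

lemma in_convex_hull_if_cross2_nonneg: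
  fixes a b c x :: "real^2"
  assumes "0 \<le> cross2 (a - x) (b - x)" "0 \<le> cross2 (b - x) (c - x)" "0 \<le> cross2 (c - x) (a - x)"
    and "0 < cross2 (a - x) (b - x) + cross2 (b - x) (c - x) + cross2 (c - x) (a - x)"
  shows "x \<in> convex hull {a, b, c}"
proof -
  define \<sigma> where "\<sigma> = cross2 (a - x) (b - x) + cross2 (b - x) (c - x) + cross2 (c - x) (a - x)"
  \<comment> \<open>Barycentric coordinates of \<open>x\<close>: signed areas of the triangles \<open>x b c\<close>, \<open>x c a\<close>, \<open>x a b\<close>.\<close>
  define \<alpha> \<beta> \<gamma> where "\<alpha> = cross2 (b - x) (c - x) / \<sigma>"
    and "\<beta> = cross2 (c - x) (a - x) / \<sigma>" and "\<gamma> = cross2 (a - x) (b - x) / \<sigma>"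
  have "0 < \<sigma>" using assms(4) by (simp add: \<sigma>_def)
  then have weights: "0 \<le> \<alpha>" "0 \<le> \<beta>" "0 \<le> \<gamma>" "\<alpha> + \<beta> + \<gamma> = 1"
    using assms(1-3) unfolding \<alpha>_def \<beta>_def \<gamma>_def
    by (simp_all add: add_divide_distrib [symmetric]) (simp add: \<sigma>_def add_ac)
  have "x = (1 / \<sigma>) *\<^sub>R (\<sigma> *\<^sub>R x)" using \<open>0 < \<sigma>\<close> by simp
  also have "\<sigma> *\<^sub>R x = cross2 (b - x) (c - x) *\<^sub>R a + cross2 (c - x) (a - x) *\<^sub>R b
      + cross2 (a - x) (b - x) *\<^sub>R c"
    using cross2_cyclic_identity[of "a - x" "b - x" "c - x"] by (simp add: \<sigma>_def algebra_simps)
  finally have "x = \<alpha> *\<^sub>R a + \<beta> *\<^sub>R b + \<gamma> *\<^sub>R c"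
    by (simp add: \<alpha>_def \<beta>_def \<gamma>_def scaleR_add_right)
  with weights show ?thesis unfolding convex_hull_3 by blast
qed

lemma not_in_convex_hull_if_cross2_pos:
  fixes a b c x :: "real^2"
  assumes "0 < cross2 (a - x) (b - x)" "0 < cross2 (a - x) (c - x)"
  shows "x \<notin> convex hull {a, b, c}"
proof
  assume "x \<in> convex hull {a, b, c}"
  then obtain \<alpha> \<beta> \<gamma> where weights: "0 \<le> \<alpha>" "0 \<le> \<beta>" "0 \<le> \<gamma>" "\<alpha> + \<beta> + \<gamma> = 1"
    and x: "x = \<alpha> *\<^sub>R a + \<beta> *\<^sub>R b + \<gamma> *\<^sub>R c"
    unfolding convex_hull_3 by blast
  have "\<alpha> *\<^sub>R (a - x) + \<beta> *\<^sub>R (b - x) + \<gamma> *\<^sub>R (c - x) = x - (\<alpha> + \<beta> + \<gamma>) *\<^sub>R x"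
    using x by (simp add: algebra_simps)
  then have "\<alpha> *\<^sub>R (a - x) + \<beta> *\<^sub>R (b - x) + \<gamma> *\<^sub>R (c - x) = 0" using weights(4) by simp
  then have "cross2 (a - x) (\<alpha> *\<^sub>R (a - x) + \<beta> *\<^sub>R (b - x) + \<gamma> *\<^sub>R (c - x)) = 0" by simp
  then have "\<beta> * cross2 (a - x) (b - x) + \<gamma> * cross2 (a - x) (c - x) = 0" by simp
  with assms weights have "\<beta> = 0" "\<gamma> = 0"
    by (smt (verit) mult_nonneg_nonneg mult_pos_pos)+
  with weights x have "x = a" by simp
  with assms show False by simp
qed

section \<open>Tournaments\<close>

definition tournament_on :: "'a set \<Rightarrow> ('a \<Rightarrow> 'a \<Rightarrow> bool) \<Rightarrow> bool" where
  "tournament_on P R \<longleftrightarrow> (\<forall>p\<in>P. \<forall>q\<in>P. p \<noteq> q \<longrightarrow> (R p q \<longleftrightarrow> \<not> R q p))"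

definition out_degree :: "'a set \<Rightarrow> ('a \<Rightarrow> 'a \<Rightarrow> bool) \<Rightarrow> 'a \<Rightarrow> nat" where
  "out_degree P R p = card {q\<in>P. q \<noteq> p \<and> R p q}"

definition cyclic_triangles :: "'a set \<Rightarrow> ('a \<Rightarrow> 'a \<Rightarrow> bool) \<Rightarrow> 'a set set" where
  "cyclic_triangles P R = {T. T \<subseteq> P \<and> card T = 3 \<and> (\<forall>s\<in>T. \<exists>q\<in>T - {s}. \<not> R s q)}"

lemma out_degree_add_in_degree:
  assumes "finite P" "tournament_on P R" "p \<in> P"
  shows "out_degree P R p + out_degree P R\<inverse>\<inverse> p = card P - 1"
proof -
  have "{q\<in>P. q \<noteq> p \<and> R p q} \<union> {q\<in>P. q \<noteq> p \<and> R q p} = P - {p}"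
    and "{q\<in>P. q \<noteq> p \<and> R p q} \<inter> {q\<in>P. q \<noteq> p \<and> R q p} = {}"
    using assms(2,3) by (auto simp: tournament_on_def)
  then show ?thesis
    using card_Un_disjoint[of "{q\<in>P. q \<noteq> p \<and> R p q}" "{q\<in>P. q \<noteq> p \<and> R q p}"] assms(1,3)
    by (simp add: out_degree_def)
qed

lemma sum_out_degree_conversep:
  assumes "finite P"
  shows "(\<Sum>p\<in>P. out_degree P R\<inverse>\<inverse> p) = (\<Sum>p\<in>P. out_degree P R p)"
proof -
  from assms have "(\<Sum>p\<in>P. out_degree P R\<inverse>\<inverse> p) = card (SIGMA p:P. {q\<in>P. q \<noteq> p \<and> R q p})"
    and "(\<Sum>p\<in>P. out_degree P R p) = card (SIGMA p:P. {q\<in>P. q \<noteq> p \<and> R p q})"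
    by (simp_all add: card_SigmaI out_degree_def)
  moreover have "(SIGMA p:P. {q\<in>P. q \<noteq> p \<and> R q p})
      = prod.swap ` (SIGMA p:P. {q\<in>P. q \<noteq> p \<and> R p q})"
    by force
  ultimately show ?thesis by (simp add: card_image)
qed

lemma sum_out_degree:
  assumes "finite P" "tournament_on P R"
  shows "2 * (\<Sum>p\<in>P. out_degree P R p) = card P * (card P - 1)"
proof -
  have "2 * (\<Sum>p\<in>P. out_degree P R p) = (\<Sum>p\<in>P. out_degree P R p + out_degree P R\<inverse>\<inverse> p)"
    using sum_out_degree_conversep[OF assms(1), of R] by (simp add: sum.distrib)
  also have "\<dots> = card P * (card P - 1)"
    using out_degree_add_in_degree[OF assms] by simp
  finally show ?thesis .
qed

text \<open>Every non-cyclic triangle has exactly one vertex beating the other two, and it is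
  counted at that vertex.\<close>
lemma card_cyclic_triangles:
  assumes "finite P" "tournament_on P R"
  shows "card P choose 3 = card (cyclic_triangles P R) + (\<Sum>p\<in>P. out_degree P R p choose 2)"
proof -
  define out where "out p = {q\<in>P. q \<noteq> p \<and> R p q}" for p
  define A where "A p = insert p ` {B. B \<subseteq> out p \<and> card B = 2}" for p
  have A_eq: "A p = {T. T \<subseteq> P \<and> card T = 3 \<and> p \<in> T \<and> (\<forall>q\<in>T - {p}. R p q)}" if "p \<in> P" for p
  proof (intro set_eqI iffI)
    fix T assume "T \<in> A p"
    then obtain B where "B \<subseteq> out p" "card B = 2" "T = insert p B" by (auto simp: A_def)
    moreover from this have "p \<notin> B" "finite B" by (auto simp: out_def intro: card_ge_0_finite)
    ultimately show "T \<in> {T. T \<subseteq> P \<and> card T = 3 \<and> p \<in> T \<and> (\<forall>q\<in>T - {p}. R p q)}"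
      using that by (auto simp: out_def)
  next
    fix T assume T: "T \<in> {T. T \<subseteq> P \<and> card T = 3 \<and> p \<in> T \<and> (\<forall>q\<in>T - {p}. R p q)}"
    then have "T = insert p (T - {p})" "T - {p} \<subseteq> out p" "card (T - {p}) = 2"
      by (auto simp: out_def)
    then show "T \<in> A p" unfolding A_def by blast
  qed
  have card_A: "card (A p) = out_degree P R p choose 2" for p
  proof -
    have "inj_on (insert p) {B. B \<subseteq> out p \<and> card B = 2}"
      by (rule inj_onI) (auto simp: out_def)
    then have "card (A p) = card {B. B \<subseteq> out p \<and> card B = 2}" by (simp add: A_def card_image)
    also have "\<dots> = out_degree P R p choose 2"
      using assms(1) by (simp add: n_subsets out_def out_degree_def)
    finally show ?thesis .
  qed
  have triples: "{T. T \<subseteq> P \<and> card T = 3} = cyclic_triangles P R \<union> (\<Union>p\<in>P. A p)"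
    and disjoint: "cyclic_triangles P R \<inter> (\<Union>p\<in>P. A p) = {}"
    by (auto simp: cyclic_triangles_def A_eq)
  have disjoint_A: "A p \<inter> A q = {}" if "p \<in> P" "q \<in> P" "p \<noteq> q" for p q
    using assms(2) that unfolding A_eq[OF that(1)] A_eq[OF that(2)] tournament_on_def by blast
  have fin: "finite (cyclic_triangles P R)" "finite (A p)" for p
    using assms(1) by (auto simp: cyclic_triangles_def A_def out_def)
  have "card P choose 3 = card {T. T \<subseteq> P \<and> card T = 3}" by (simp add: n_subsets assms(1))
  also have "\<dots> = card (cyclic_triangles P R) + (\<Sum>p\<in>P. card (A p))"
    unfolding triples using assms(1) fin disjoint disjoint_A
    by (simp add: card_Un_disjoint card_UN_disjoint)
  finally show ?thesis by (simp add: card_A)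
qed

lemma card_cyclic_triangles_almost_regular:
  assumes "finite P" "tournament_on P R" "card P = 2 * m"
    and "\<And>p. p \<in> P \<Longrightarrow> m - 1 \<le> out_degree P R p \<and> m - 1 \<le> out_degree P R\<inverse>\<inverse> p"
  shows "3 * card (cyclic_triangles P R) = (m + 1) * m * (m - 1)"
proof (cases "m = 0")
  case False
  have degree: "out_degree P R p = m - 1 \<or> out_degree P R p = m" if "p \<in> P" for p
    using assms(4)[OF that] out_degree_add_in_degree[OF assms(1,2) that] assms(3) by linarith
  have real_choose2: "real (n choose 2) = real n * (real n - 1) / 2" for n
    by (simp add: binomial_gbinomial gbinomial_prod_rev numeral_2_eq_2 lessThan_Suc field_simps)
  \<comment> \<open>Both possible degrees satisfy this linear formula for the binomial coefficient.\<close>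
  have choose2:
    "real (out_degree P R p choose 2) = (real m - 1) / 2 * (2 * real (out_degree P R p) - real m)"
    if "p \<in> P" for p
    using degree[OF that] False by (auto simp: real_choose2 of_nat_diff field_simps)
  have sum_degree: "2 * (\<Sum>p\<in>P. real (out_degree P R p)) = 2 * real m * (2 * real m - 1)"
    using arg_cong[OF sum_out_degree[OF assms(1,2)], of real] assms(3) False
    by (simp add: of_nat_sum of_nat_diff)
  have "(\<Sum>p\<in>P. real (out_degree P R p choose 2))
      = (\<Sum>p\<in>P. (real m - 1) / 2 * (2 * real (out_degree P R p) - real m))"
    by (rule sum.cong) (simp_all add: choose2)
  also have "\<dots> = (real m - 1) / 2 * (\<Sum>p\<in>P. 2 * real (out_degree P R p) - real m)"
    by (rule sum_distrib_left [symmetric])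
  also have "(\<Sum>p\<in>P. 2 * real (out_degree P R p) - real m)
      = 2 * (\<Sum>p\<in>P. real (out_degree P R p)) - real (card P) * real m"
    by (simp add: sum_subtractf sum_distrib_left)
  also have "(real m - 1) / 2 * (2 * (\<Sum>p\<in>P. real (out_degree P R p)) - real (card P) * real m)
      = real m * (real m - 1) ^ 2"
    unfolding sum_degree using assms(3) by (simp add: power2_eq_square field_simps)
  finally have sum_choose2: "(\<Sum>p\<in>P. real (out_degree P R p choose 2)) = real m * (real m - 1) ^ 2" .
  have choose3: "real (card P choose 3) = 2 * real m * (2 * real m - 1) * (2 * real m - 2) / 6"
    using assms(3) by (simp add: binomial_gbinomial gbinomial_prod_rev numeral_3_eq_3 lessThan_Suc
      fact_numeral field_simps)
  have "real (card P choose 3)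
      = real (card (cyclic_triangles P R)) + (\<Sum>p\<in>P. real (out_degree P R p choose 2))"
    using arg_cong[OF card_cyclic_triangles[OF assms(1,2)], of real] by simp
  then have "3 * real (card (cyclic_triangles P R)) = (real m + 1) * real m * (real m - 1)"
    unfolding choose3 sum_choose2 by (simp add: power2_eq_square field_simps)
  then have "real (3 * card (cyclic_triangles P R)) = real ((m + 1) * m * (m - 1))"
    using False by (simp add: of_nat_diff algebra_simps)
  then show ?thesis by (simp only: of_nat_eq_iff)
qed (use assms(1,3) in \<open>auto simp: cyclic_triangles_def\<close>)

section \<open>Sectors of lines through a point\<close>

lemma card_strict_lower_sets:
  fixes f :: "'a \<Rightarrow> real"
  assumes "finite A" "inj_on f A"
  shows "card ((\<lambda>t. {a\<in>A. f a < t}) ` (- f ` A)) = card A + 1"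
proof -
  define lower where "lower b = {a\<in>A. f a \<le> f b}" for b
  have "(\<lambda>t. {a\<in>A. f a < t}) ` (- f ` A) = insert {} (lower ` A)"
  proof (intro equalityI subsetI)
    fix B assume "B \<in> (\<lambda>t. {a\<in>A. f a < t}) ` (- f ` A)"
    then obtain t where B: "B = {a\<in>A. f a < t}" by auto
    show "B \<in> insert {} (lower ` A)"
    proof (cases "B = {}")
      case False
      have fin: "finite (f ` B)" using assms(1) B by simp
      with False have "Max (f ` B) \<in> f ` B" by (intro Max_in) auto
      then obtain b where b: "b \<in> B" "f b = Max (f ` B)" by auto
      have "f a \<le> f b" if "a \<in> B" for a using b(2) fin that by simp
      then have "B = lower b" using b(1) B by (fastforce simp: lower_def)
      then show ?thesis using b B by auto
    qed simp
  next
    fix B assume "B \<in> insert {} (lower ` A)"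
    then consider "B = {}" | b where "b \<in> A" "B = lower b" by blast
    then show "B \<in> (\<lambda>t. {a\<in>A. f a < t}) ` (- f ` A)"
    proof cases
      case 1
      define c where "c = Min (insert 0 (f ` A))"
      have "c \<le> f a" if "a \<in> A" for a using assms(1) that by (simp add: c_def)
      then have "c - 1 \<notin> f ` A" "{a\<in>A. f a < c - 1} = {}" by force+
      then show ?thesis using 1 by blast
    next
      case 2
      obtain \<delta> where \<delta>: "\<delta> > 0" "\<forall>y\<in>f ` A. y \<noteq> f b \<longrightarrow> \<delta> \<le> dist (f b) y"
        using finite_set_avoid[of "f ` A" "f b"] assms(1) by blast
      have "f b + \<delta> / 2 \<notin> f ` A" "lower b = {a\<in>A. f a < f b + \<delta> / 2}"
        using \<delta> by (force simp: lower_def dist_real_def)+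
      then show ?thesis using 2 by blast
    qed
  qed
  moreover have "inj_on lower A"
    using assms(2) by (auto simp: inj_on_def lower_def intro: order.antisym)
  moreover have "{} \<notin> lower ` A" by (auto simp: lower_def)
  ultimately show ?thesis using assms(1) by (simp add: card_image)
qed

lemma convex_combination_sign:
  fixes a b t :: real
  assumes "0 \<le> t" "t \<le> 1" "a \<noteq> 0" "b \<noteq> 0" "(0 < a) = (0 < b)"
  shows "(1 - t) * a + t * b \<noteq> 0 \<and> (0 < (1 - t) * a + t * b) = (0 < a)"
proof (cases "0 < a")
  case True
  with assms have "0 < (1 - t) * a + t * b"
    by (cases "t = 1") (auto intro: add_pos_nonneg)
  with True show ?thesis by simp
next
  case False
  with assms have "(1 - t) * a + t * b < 0"
    by (cases "t = 1") (auto intro: add_neg_nonpos simp: mult_pos_neg mult_nonneg_nonpos)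
  with False show ?thesis by simp
qed

locale central_arrangement =
  fixes x :: "real^2" and L :: "(real^2) set set" and dir :: "(real^2) set \<Rightarrow> real^2"
  assumes finite_lines: "finite L" and lines_nonempty: "L \<noteq> {}"
    and dir_nonzero: "l \<in> L \<Longrightarrow> dir l \<noteq> 0"
    and line_eq: "l \<in> L \<Longrightarrow> l = {v. cross2 (dir l) (v - x) = 0}"
begin

definition off_lines :: "(real^2) set" where
  "off_lines = {v. \<forall>l\<in>L. cross2 (dir l) (v - x) \<noteq> 0}"

text \<open>The side of each line on which a point lies; its values label the sectors.\<close>
definition side_vector :: "real^2 \<Rightarrow> (real^2) set \<Rightarrow> bool" where
  "side_vector v = restrict (\<lambda>l. 0 < cross2 (dir l) (v - x)) L"

definition transversal :: "real^2 \<Rightarrow> bool" where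
  "transversal u \<longleftrightarrow> (\<forall>l\<in>L. cross2 (dir l) u \<noteq> 0)"

definition sectors_left_of :: "real^2 \<Rightarrow> ((real^2) set \<Rightarrow> bool) set" where
  "sectors_left_of u = side_vector ` {v\<in>off_lines. 0 < cross2 u (v - x)}"

lemma Compl_Union_lines: "- \<Union>L = off_lines"
  using line_eq by (auto simp: off_lines_def)

lemma open_off_lines: "open off_lines"
proof -
  have "off_lines = (\<Inter>l\<in>L. {v. perp (dir l) \<bullet> v \<noteq> perp (dir l) \<bullet> x})"
    by (auto simp: off_lines_def cross2_eq_inner_perp inner_diff_right)
  moreover have "open {v. perp (dir l) \<bullet> v \<noteq> perp (dir l) \<bullet> x}" for l
    by (intro open_Collect_neq continuous_intros)
  ultimately show ?thesis using finite_lines by auto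
qed

lemma off_lines_nonempty: "off_lines \<noteq> {}"
proof
  assume "off_lines = {}"
  then have "\<Union>L = UNIV" using Compl_Union_lines by auto
  moreover have "negligible l" if "l \<in> L" for l
  proof -
    have "l = {v. perp (dir l) \<bullet> v = perp (dir l) \<bullet> x}"
      using line_eq[OF that] by (simp add: cross2_eq_inner_perp inner_diff_right)
    then show ?thesis using dir_nonzero[OF that] by (metis negligible_hyperplane perp_eq_0_iff)
  qed
  then have "negligible (\<Union>L)" using finite_lines by blast
  ultimately show False by simp
qed

lemma transversal_nonzero: "transversal u \<Longrightarrow> u \<noteq> 0"
  using lines_nonempty by (auto simp: transversal_def)

lemma transversal_uminus: "transversal u \<Longrightarrow> transversal (- u)"
  by (simp add: transversal_def)

lemma transversal_diff: "v \<in> off_lines \<Longrightarrow> transversal (v - x)"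
  by (simp add: transversal_def off_lines_def)

lemma transversal_imp_off_lines: "transversal u \<Longrightarrow> x + u \<in> off_lines \<and> x - u \<in> off_lines"
  by (simp add: transversal_def off_lines_def)

lemma side_vector_closed_segment:
  assumes v: "v \<in> off_lines" and w: "w \<in> off_lines" and "side_vector v = side_vector w"
    and "z \<in> closed_segment v w"
  shows "z \<in> off_lines \<and> side_vector z = side_vector v"
proof -
  obtain t where t: "0 \<le> t" "t \<le> 1" "z = (1 - t) *\<^sub>R v + t *\<^sub>R w"
    using assms(4) by (auto simp: closed_segment_def)
  then have zx: "z - x = (1 - t) *\<^sub>R (v - x) + t *\<^sub>R (w - x)"
    by (simp add: algebra_simps)
  have same_sign: "(0 < cross2 (dir l) (v - x)) = (0 < cross2 (dir l) (w - x))" if "l \<in> L" for l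
  proof -
    have "side_vector v l = side_vector w l" using assms(3) by simp
    then show ?thesis using that by (simp add: side_vector_def)
  qed
  have z_sign:
    "cross2 (dir l) (z - x) \<noteq> 0 \<and> (0 < cross2 (dir l) (z - x)) = (0 < cross2 (dir l) (v - x))"
    if l: "l \<in> L" for l
  proof -
    have "cross2 (dir l) (v - x) \<noteq> 0" "cross2 (dir l) (w - x) \<noteq> 0"
      using v w l by (auto simp: off_lines_def)
    moreover have
      "cross2 (dir l) (z - x) = (1 - t) * cross2 (dir l) (v - x) + t * cross2 (dir l) (w - x)"
      unfolding zx by simp
    ultimately show ?thesis using convex_combination_sign[OF t(1,2)] same_sign[OF l] by simp
  qed
  have "z \<in> off_lines" using z_sign by (simp add: off_lines_def)
  moreover have "side_vector z = side_vector v"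
    unfolding side_vector_def by (rule restrict_ext) (use z_sign in blast)
  ultimately show ?thesis ..
qed

lemma side_vector_eq_if_connected:
  assumes "connected C" "C \<subseteq> off_lines" "v \<in> C" "w \<in> C"
  shows "side_vector v = side_vector w"
proof (rule ext, rule ccontr)
  fix l assume differ: "side_vector v l \<noteq> side_vector w l"
  then have l: "l \<in> L" by (cases "l \<in> L") (auto simp: side_vector_def)
  \<comment> \<open>The line \<open>l\<close> separates \<open>v\<close> from \<open>w\<close>, so the connected set \<open>C\<close> meets it.\<close>
  let ?a = "perp (dir l)"
  have "?a \<bullet> w \<le> ?a \<bullet> x \<and> ?a \<bullet> x \<le> ?a \<bullet> v \<or> ?a \<bullet> v \<le> ?a \<bullet> x \<and> ?a \<bullet> x \<le> ?a \<bullet> w"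
    using differ l by (auto simp: side_vector_def cross2_eq_inner_perp inner_diff_right)
  then have "\<exists>z\<in>C. ?a \<bullet> z = ?a \<bullet> x"
  proof
    assume "?a \<bullet> w \<le> ?a \<bullet> x \<and> ?a \<bullet> x \<le> ?a \<bullet> v"
    then show ?thesis by (intro connected_ivt_hyperplane[OF assms(1,4,3)]) auto
  next
    assume "?a \<bullet> v \<le> ?a \<bullet> x \<and> ?a \<bullet> x \<le> ?a \<bullet> w"
    then show ?thesis by (intro connected_ivt_hyperplane[OF assms(1,3,4)]) auto
  qed
  then obtain z where z: "z \<in> C" "?a \<bullet> z = ?a \<bullet> x" ..
  have "z \<in> off_lines" using z(1) assms(2) by blast
  moreover have "cross2 (dir l) (z - x) = 0"
    using z(2) by (simp add: cross2_eq_inner_perp inner_diff_right)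
  ultimately show False using l by (simp add: off_lines_def)
qed

lemma connected_component_off_lines:
  assumes v: "v \<in> off_lines"
  shows "connected_component_set off_lines v = {w\<in>off_lines. side_vector w = side_vector v}"
proof (intro equalityI subsetI)
  fix w assume w: "w \<in> connected_component_set off_lines v"
  have "w \<in> off_lines" using w connected_component_subset by blast
  moreover have "side_vector w = side_vector v"
    by (rule side_vector_eq_if_connected
        [OF connected_connected_component connected_component_subset w])
      (use v in simp)
  ultimately show "w \<in> {w\<in>off_lines. side_vector w = side_vector v}" by simp
next
  fix w assume w: "w \<in> {w\<in>off_lines. side_vector w = side_vector v}"
  have "closed_segment v w \<subseteq> off_lines"
  proof
    fix z assume "z \<in> closed_segment v w"
    then show "z \<in> off_lines" using side_vector_closed_segment[OF v, of w z] w by simp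
  qed
  then have "connected_component off_lines v w"
    using connected_componentI[of "closed_segment v w" off_lines v w] by auto
  then show "w \<in> connected_component_set off_lines v" by simp
qed

lemma finite_side_vectors: "finite (side_vector ` A)"
proof (rule finite_subset)
  show "side_vector ` A \<subseteq> PiE L (\<lambda>_. UNIV)" by (auto simp: side_vector_def)
  show "finite (PiE L (\<lambda>_. UNIV :: bool set))" using finite_lines by (intro finite_PiE) auto
qed

lemma side_vector_scaleR: "0 < t \<Longrightarrow> side_vector (x + t *\<^sub>R w) = side_vector (x + w)"
  unfolding side_vector_def by (auto intro!: restrict_ext simp: zero_less_mult_iff)

lemma off_lines_scaleR: "0 < t \<Longrightarrow> x + t *\<^sub>R w \<in> off_lines \<longleftrightarrow> x + w \<in> off_lines"
  unfolding off_lines_def by auto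

lemma dir_eq_imp_line_eq:
  assumes "l1 \<in> L" "l2 \<in> L" "cross2 (dir l1) (dir l2) = 0"
  shows "l1 = l2"
proof -
  obtain s where s: "dir l2 = s *\<^sub>R dir l1"
    using cross2_eq_0_imp_parallel assms dir_nonzero by blast
  with dir_nonzero[OF assms(2)] have "s \<noteq> 0" by auto
  with s have "cross2 (dir l2) v = 0 \<longleftrightarrow> cross2 (dir l1) v = 0" for v by simp
  then show ?thesis using line_eq[OF assms(1)] line_eq[OF assms(2)] by blast
qed

text \<open>The parameter \<open>t\<close> at which the line \<open>t \<mapsto> x + perp u + t u\<close>, parallel to \<open>u\<close>,
  crosses the line \<open>l\<close>.\<close>
definition crossing :: "real^2 \<Rightarrow> (real^2) set \<Rightarrow> real" where
  "crossing u l = - cross2 (dir l) (perp u) / cross2 (dir l) u"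

lemma cross2_parallel_line:
  assumes "transversal u" "l \<in> L"
  shows "cross2 (dir l) (x + perp u + t *\<^sub>R u - x) = cross2 (dir l) u * (t - crossing u l)"
  using assms by (simp add: transversal_def crossing_def field_simps)

lemma inj_on_crossing:
  assumes "transversal u"
  shows "inj_on (crossing u) L"
proof (rule inj_onI)
  fix a b assume ab: "a \<in> L" "b \<in> L" "crossing u a = crossing u b"
  define v where "v = perp u + crossing u a *\<^sub>R u"
  have "cross2 u v = cross2 u (perp u)" by (simp add: v_def)
  then have "v \<noteq> 0" using cross2_perp_pos[OF transversal_nonzero[OF assms]] by auto
  moreover have "cross2 (dir a) v = 0" "cross2 (dir b) v = 0"
    using cross2_parallel_line[OF assms, of _ "crossing u a"] ab by (simp_all add: v_def)
  ultimately show "a = b" using cross2_eq_0_trans dir_eq_imp_line_eq ab(1,2) by blast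
qed

lemma off_lines_parallel_line:
  assumes "transversal u"
  shows "x + perp u + t *\<^sub>R u \<in> off_lines \<longleftrightarrow> t \<notin> crossing u ` L"
  using cross2_parallel_line[OF assms] assms by (auto simp: off_lines_def transversal_def)

lemma side_vector_parallel_line:
  assumes "transversal u" "t \<notin> crossing u ` L"
  shows "side_vector (x + perp u + t *\<^sub>R u)
    = restrict (\<lambda>l. (0 < cross2 (dir l) u) = (l \<in> {l\<in>L. crossing u l < t})) L"
  unfolding side_vector_def
proof (rule restrict_ext)
  fix l assume l: "l \<in> L"
  with assms have "t \<noteq> crossing u l" "cross2 (dir l) u \<noteq> 0" by (auto simp: transversal_def)
  then show "(0 < cross2 (dir l) (x + perp u + t *\<^sub>R u - x))
      = ((0 < cross2 (dir l) u) = (l \<in> {l\<in>L. crossing u l < t}))"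
    unfolding cross2_parallel_line[OF assms(1) l] using l by (auto simp: zero_less_mult_iff)
qed

lemma sectors_left_of_eq_parallel_line:
  assumes "transversal u"
  shows "sectors_left_of u = (\<lambda>t. side_vector (x + perp u + t *\<^sub>R u)) ` (- crossing u ` L)"
proof (intro equalityI subsetI)
  fix s assume "s \<in> sectors_left_of u"
  then obtain v where v: "v \<in> off_lines" "0 < cross2 u (v - x)" "s = side_vector v"
    by (auto simp: sectors_left_of_def)
  have "u \<noteq> 0" using transversal_nonzero[OF assms] .
  define c where "c = cross2 u (perp u) / cross2 u (v - x)"
  have "0 < c" using v(2) cross2_perp_pos[OF \<open>u \<noteq> 0\<close>] by (simp add: c_def)
  then have w: "x + c *\<^sub>R (v - x) \<in> off_lines" "side_vector (x + c *\<^sub>R (v - x)) = s"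
    using off_lines_scaleR side_vector_scaleR v by auto
  have "cross2 u (c *\<^sub>R (v - x) - perp u) = 0"
    using v(2) by (simp add: c_def cross2_diff_right)
  then obtain t where "c *\<^sub>R (v - x) - perp u = t *\<^sub>R u"
    using cross2_eq_0_imp_parallel[OF \<open>u \<noteq> 0\<close>] by blast
  then have "x + c *\<^sub>R (v - x) = x + perp u + t *\<^sub>R u" by (simp add: algebra_simps)
  with w off_lines_parallel_line[OF assms]
  show "s \<in> (\<lambda>t. side_vector (x + perp u + t *\<^sub>R u)) ` (- crossing u ` L)" by auto
next
  fix s assume "s \<in> (\<lambda>t. side_vector (x + perp u + t *\<^sub>R u)) ` (- crossing u ` L)"
  then obtain t where "t \<notin> crossing u ` L" "s = side_vector (x + perp u + t *\<^sub>R u)" by auto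
  moreover have "0 < cross2 u (x + perp u + t *\<^sub>R u - x)"
    using cross2_perp_pos[OF transversal_nonzero[OF assms]] by simp
  ultimately show "s \<in> sectors_left_of u"
    using off_lines_parallel_line[OF assms] by (auto simp: sectors_left_of_def)
qed

text \<open>Walking along a line parallel to \<open>u\<close>, the side vector changes exactly when a line of
  the arrangement is crossed, and every line is crossed once, at a different point.\<close>
lemma card_sectors_left_of:
  assumes "transversal u"
  shows "card (sectors_left_of u) = card L + 1"
proof -
  define F where "F X = restrict (\<lambda>l. (0 < cross2 (dir l) u) = (l \<in> X)) L" for X
  have "sectors_left_of u = F ` (\<lambda>t. {l\<in>L. crossing u l < t}) ` (- crossing u ` L)"
    unfolding sectors_left_of_eq_parallel_line[OF assms] image_image F_def
    using side_vector_parallel_line[OF assms] by (intro image_cong) auto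
  moreover have "inj_on F (Pow L)"
  proof (rule inj_onI)
    fix X Y assume XY: "X \<in> Pow L" "Y \<in> Pow L" "F X = F Y"
    have "l \<in> X \<longleftrightarrow> l \<in> Y" if "l \<in> L" for l
    proof -
      have "F X l = F Y l" using XY(3) by simp
      then show ?thesis using that by (simp add: F_def) blast
    qed
    then show "X = Y" using XY(1,2) by auto
  qed
  moreover have "(\<lambda>t. {l\<in>L. crossing u l < t}) ` (- crossing u ` L) \<subseteq> Pow L" by auto
  ultimately have
    "card (sectors_left_of u) = card ((\<lambda>t. {l\<in>L. crossing u l < t}) ` (- crossing u ` L))"
    by (simp add: card_image inj_on_subset)
  also have "\<dots> = card L + 1"
    using card_strict_lower_sets[OF finite_lines inj_on_crossing[OF assms]] .
  finally show ?thesis .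
qed

lemma side_vector_on_transversal:
  assumes "transversal u" "v \<in> off_lines" "cross2 u (v - x) = 0"
  shows "side_vector v \<in> {side_vector (x + u), side_vector (x - u)}"
proof -
  obtain t where t: "v - x = t *\<^sub>R u"
    using cross2_eq_0_imp_parallel[OF transversal_nonzero] assms by blast
  from lines_nonempty obtain l where "l \<in> L" by blast
  with assms(2) t have "t \<noteq> 0" by (auto simp: off_lines_def)
  then consider "0 < t" | "0 < - t" by linarith
  then show ?thesis
  proof cases
    case 1
    have "v = x + t *\<^sub>R u" using t by (simp add: algebra_simps)
    then show ?thesis using side_vector_scaleR[OF 1, of u] by simp
  next
    case 2
    have "v = x + (- t) *\<^sub>R (- u)" using t by (simp add: algebra_simps)
    then show ?thesis using side_vector_scaleR[OF 2, of "- u"] by simp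
  qed
qed

lemma side_vector_in_sectors_left_of:
  assumes "u \<noteq> 0" "v \<in> off_lines" "cross2 u (v - x) = 0"
  shows "side_vector v \<in> sectors_left_of u"
proof -
  have "open (connected_component_set off_lines v)"
    by (rule open_connected_component[OF open_off_lines])
  moreover have "v \<in> connected_component_set off_lines v" using assms(2) by simp
  ultimately obtain e where "0 < e" and ball: "ball v e \<subseteq> connected_component_set off_lines v"
    by (meson openE)
  \<comment> \<open>Push \<open>v\<close> slightly off the line spanned by \<open>u\<close>, to its left, without leaving its sector.\<close>
  define z where "z = v + (e / (2 * norm (perp u))) *\<^sub>R perp u"
  have "dist v z = e / 2" using \<open>0 < e\<close> assms(1) by (simp add: z_def dist_norm)
  with \<open>0 < e\<close> have "z \<in> ball v e" by simp
  then have "z \<in> connected_component_set off_lines v" using ball by blast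
  then have "z \<in> off_lines" "side_vector z = side_vector v"
    using connected_component_off_lines[OF assms(2)] by auto
  moreover have "0 < cross2 u (z - x)"
    using assms \<open>0 < e\<close> cross2_perp_pos[OF assms(1)]
    by (simp add: z_def cross2_diff_right cross2_eq_inner_perp[of u v])
  ultimately show ?thesis
    unfolding sectors_left_of_def by (intro image_eqI[where x = z]) auto
qed

lemma sectors_left_of_Int:
  assumes "transversal u"
  shows "sectors_left_of u \<inter> sectors_left_of (- u) = {side_vector (x + u), side_vector (x - u)}"
proof
  show "sectors_left_of u \<inter> sectors_left_of (- u) \<subseteq> {side_vector (x + u), side_vector (x - u)}"
  proof
    fix s assume "s \<in> sectors_left_of u \<inter> sectors_left_of (- u)"
    then obtain a b where a: "a \<in> off_lines" "0 < cross2 u (a - x)" "s = side_vector a"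
      and b: "b \<in> off_lines" "cross2 u (b - x) < 0" "s = side_vector b"
      by (auto simp: sectors_left_of_def)
    let ?C = "connected_component_set off_lines a"
    \<comment> \<open>The sector of \<open>s\<close> lies on both sides of the line spanned by \<open>u\<close>, so it meets it.\<close>
    have "b \<in> ?C" "a \<in> ?C" using connected_component_off_lines[OF a(1)] a b by auto
    moreover have "perp u \<bullet> b \<le> perp u \<bullet> x" "perp u \<bullet> x \<le> perp u \<bullet> a"
      using a(2) b(2) by (simp_all add: cross2_eq_inner_perp inner_diff_right)
    ultimately obtain z where z: "z \<in> ?C" "perp u \<bullet> z = perp u \<bullet> x"
      using connected_ivt_hyperplane[OF connected_connected_component] by blast
    then have "z \<in> off_lines" "side_vector z = s"
      using connected_component_off_lines[OF a(1)] a(3) by auto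
    moreover have "cross2 u (z - x) = 0"
      using z(2) by (simp add: cross2_eq_inner_perp inner_diff_right)
    ultimately show "s \<in> {side_vector (x + u), side_vector (x - u)}"
      using side_vector_on_transversal[OF assms] by blast
  qed
next
  have "x + u \<in> off_lines" "x - u \<in> off_lines" "u \<noteq> 0"
    using transversal_imp_off_lines transversal_nonzero assms by auto
  then show "{side_vector (x + u), side_vector (x - u)} \<subseteq> sectors_left_of u \<inter> sectors_left_of (- u)"
    using side_vector_in_sectors_left_of[of u] side_vector_in_sectors_left_of[of "- u"] by simp
qed

lemma side_vectors_eq_Un:
  assumes "u \<noteq> 0"
  shows "side_vector ` off_lines = sectors_left_of u \<union> sectors_left_of (- u)"
proof
  show "side_vector ` off_lines \<subseteq> sectors_left_of u \<union> sectors_left_of (- u)"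
  proof
    fix s assume "s \<in> side_vector ` off_lines"
    then obtain v where v: "v \<in> off_lines" "s = side_vector v" by auto
    consider "0 < cross2 u (v - x)" | "cross2 u (v - x) < 0" | "cross2 u (v - x) = 0" by linarith
    then show "s \<in> sectors_left_of u \<union> sectors_left_of (- u)"
      by cases (use v side_vector_in_sectors_left_of[OF assms] in \<open>auto simp: sectors_left_of_def\<close>)
  qed
qed (auto simp: sectors_left_of_def)

lemma side_vector_plus_neq_minus:
  assumes "transversal u"
  shows "side_vector (x + u) \<noteq> side_vector (x - u)"
proof
  from lines_nonempty obtain l where l: "l \<in> L" by blast
  assume "side_vector (x + u) = side_vector (x - u)"
  then have "side_vector (x + u) l = side_vector (x - u) l" by simp
  with l have "(0 < cross2 (dir l) u) = (0 < - cross2 (dir l) u)" by (simp add: side_vector_def)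
  with assms l show False by (auto simp: transversal_def)
qed

lemma card_side_vectors: "card (side_vector ` off_lines) = 2 * card L"
proof -
  from off_lines_nonempty obtain v where "v \<in> off_lines" by blast
  define u where "u = v - x"
  have "transversal u" using transversal_diff[OF \<open>v \<in> off_lines\<close>] by (simp add: u_def)
  then have u: "transversal u" "transversal (- u)" "u \<noteq> 0"
    using transversal_uminus transversal_nonzero by auto
  have "card (sectors_left_of u \<union> sectors_left_of (- u))
      + card (sectors_left_of u \<inter> sectors_left_of (- u))
      = card (sectors_left_of u) + card (sectors_left_of (- u))"
    using card_Un_Int[of "sectors_left_of u" "sectors_left_of (- u)"]
    by (simp add: sectors_left_of_def finite_side_vectors)
  moreover have "card (sectors_left_of u \<inter> sectors_left_of (- u)) = 2"
    using sectors_left_of_Int[OF u(1)] side_vector_plus_neq_minus[OF u(1)] by simp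
  ultimately show ?thesis
    using side_vectors_eq_Un[OF u(3)] card_sectors_left_of[OF u(1)] card_sectors_left_of[OF u(2)]
    by simp
qed

lemma bij_betw_side_vector:
  assumes "P \<subseteq> off_lines" "\<forall>C\<in>components off_lines. card (P \<inter> C) = 1"
  shows "bij_betw side_vector P (side_vector ` off_lines)"
proof -
  have one: "card (P \<inter> {w\<in>off_lines. side_vector w = side_vector v}) = 1" if "v \<in> off_lines" for v
    using assms(2) that connected_component_off_lines[OF that]
    by (metis (no_types, lifting) components_iff)
  have "inj_on side_vector P"
  proof (rule inj_onI)
    fix p q assume pq: "p \<in> P" "q \<in> P" "side_vector p = side_vector q"
    then have "p \<in> P \<inter> {w\<in>off_lines. side_vector w = side_vector p}"
      "q \<in> P \<inter> {w\<in>off_lines. side_vector w = side_vector p}"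
      using assms(1) by auto
    moreover obtain a where "P \<inter> {w\<in>off_lines. side_vector w = side_vector p} = {a}"
      using one[of p] pq assms(1) card_1_singletonE by blast
    ultimately have "p = a" "q = a" by auto
    then show "p = q" by simp
  qed
  moreover have "side_vector ` off_lines \<subseteq> side_vector ` P"
  proof
    fix s assume "s \<in> side_vector ` off_lines"
    then obtain v where "v \<in> off_lines" "s = side_vector v" by auto
    with one[of v] obtain p where "p \<in> P" "side_vector p = s" by (auto simp: card_Suc_eq)
    then show "s \<in> side_vector ` P" by blast
  qed
  ultimately show ?thesis using assms(1) by (auto simp: bij_betw_def)
qed

lemma card_sector_representatives:
  assumes "P \<subseteq> off_lines" "\<forall>C\<in>components off_lines. card (P \<inter> C) = 1"
  shows "card P = 2 * card L"
  using bij_betw_same_card[OF bij_betw_side_vector[OF assms]] card_side_vectors by simp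

text \<open>Of the \<open>card L + 1\<close> sectors meeting the open half-plane to the left of \<open>u\<close>, two are
  cut by the line spanned by \<open>u\<close>; the others lie entirely to its left.\<close>
lemma card_left_of_ge:
  assumes "transversal u" "P \<subseteq> off_lines" "\<forall>C\<in>components off_lines. card (P \<inter> C) = 1"
  shows "card L - 1 \<le> card {q\<in>P. 0 < cross2 u (q - x)}"
proof -
  define A where "A = sectors_left_of u - {side_vector (x + u), side_vector (x - u)}"
  have bij: "bij_betw side_vector P (side_vector ` off_lines)"
    using bij_betw_side_vector[OF assms(2,3)] .
  then have "finite P" using bij_betw_finite finite_side_vectors by blast
  have "{side_vector (x + u), side_vector (x - u)} \<subseteq> sectors_left_of u"
    using sectors_left_of_Int[OF assms(1)] by blast
  then have "card L - 1 = card A"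
    using card_sectors_left_of[OF assms(1)] side_vector_plus_neq_minus[OF assms(1)]
    by (simp add: A_def card_Diff_subset)
  also have "\<dots> \<le> card (side_vector ` {q\<in>P. 0 < cross2 u (q - x)})"
  proof (rule card_mono[OF finite_side_vectors], rule subsetI)
    fix s assume s: "s \<in> A"
    then have "s \<in> side_vector ` P"
      using bij unfolding A_def sectors_left_of_def bij_betw_def by blast
    then obtain q where q: "q \<in> P" "side_vector q = s" by blast
    have "\<not> cross2 u (q - x) < 0" "cross2 u (q - x) \<noteq> 0"
      using q s assms(2) sectors_left_of_Int[OF assms(1)] side_vector_on_transversal[OF assms(1)]
      by (auto simp: A_def sectors_left_of_def)
    with q show "s \<in> side_vector ` {q\<in>P. 0 < cross2 u (q - x)}" by force
  qed
  also have "\<dots> \<le> card {q\<in>P. 0 < cross2 u (q - x)}"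
    using \<open>finite P\<close> by (intro card_image_le) simp
  finally show ?thesis .
qed

lemma card_both_sides_of_representative_ge:
  assumes "P \<subseteq> off_lines" "\<forall>C\<in>components off_lines. card (P \<inter> C) = 1" "p \<in> P"
  shows "card L - 1 \<le> card {q\<in>P. 0 < cross2 (p - x) (q - x)}"
    and "card L - 1 \<le> card {q\<in>P. 0 < cross2 (x - p) (q - x)}"
proof -
  have "transversal (p - x)" using assms(1,3) transversal_diff by auto
  moreover from this have "transversal (x - p)" using transversal_uminus by fastforce
  ultimately show "card L - 1 \<le> card {q\<in>P. 0 < cross2 (p - x) (q - x)}"
    and "card L - 1 \<le> card {q\<in>P. 0 < cross2 (x - p) (q - x)}"
    using card_left_of_ge assms(1,2) by blast+
qed

end

section \<open>The counterclockwise tournament\<close>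

lemma central_arrangement_if_lines_through:
  assumes "finite L" "L \<noteq> {}" "\<forall>l\<in>L. line_through x l"
  obtains dir where "central_arrangement x L dir"
proof -
  define dir where "dir l = (SOME d. d \<noteq> 0 \<and> l = range (\<lambda>t. x + t *\<^sub>R d))" for l
  have dir: "dir l \<noteq> 0 \<and> l = range (\<lambda>t. x + t *\<^sub>R dir l)" if "l \<in> L" for l
  proof -
    have "\<exists>d. d \<noteq> 0 \<and> l = range (\<lambda>t. x + t *\<^sub>R d)"
      using assms(3) that unfolding line_through_def by blast
    from someI_ex[OF this] show ?thesis unfolding dir_def .
  qed
  have "central_arrangement x L dir"
  proof
    show "l = {v. cross2 (dir l) (v - x) = 0}" if "l \<in> L" for l
      using dir[OF that] line_eq_cross2_eq_0 by blast
  qed (use assms(1,2) dir in auto)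
  then show ?thesis ..
qed

definition ccw_tournament :: "real^2 \<Rightarrow> (real^2 \<Rightarrow> nat) \<Rightarrow> real^2 \<Rightarrow> real^2 \<Rightarrow> bool" where
  "ccw_tournament x r p q \<longleftrightarrow>
     0 < cross2 (p - x) (q - x) \<or> (cross2 (p - x) (q - x) = 0 \<and> r p < r q)"

lemma tournament_on_ccw_tournament:
  assumes "inj_on r P"
  shows "tournament_on P (ccw_tournament x r)"
  unfolding tournament_on_def
proof (intro ballI impI)
  fix p q assume "p \<in> P" "q \<in> P" "p \<noteq> q"
  with assms have "r p \<noteq> r q" by (auto dest: inj_onD)
  with cross2_commute[of "p - x" "q - x"]
  show "ccw_tournament x r p q \<longleftrightarrow> \<not> ccw_tournament x r q p"
    by (auto simp: ccw_tournament_def)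
qed

lemma out_degree_ccw_tournament_ge:
  assumes "finite P"
  shows "card {q\<in>P. 0 < cross2 (p - x) (q - x)} \<le> out_degree P (ccw_tournament x r) p"
  unfolding out_degree_def
  by (rule card_mono) (use assms in \<open>auto simp: ccw_tournament_def\<close>)

lemma in_degree_ccw_tournament_ge:
  assumes "finite P"
  shows "card {q\<in>P. 0 < cross2 (x - p) (q - x)} \<le> out_degree P (ccw_tournament x r)\<inverse>\<inverse> p"
  unfolding out_degree_def
proof (rule card_mono)
  have "cross2 (x - p) (q - x) = - cross2 (p - x) (q - x)" for q
    by (simp add: cross2_def algebra_simps)
  then show "{q\<in>P. 0 < cross2 (x - p) (q - x)} \<subseteq> {q\<in>P. q \<noteq> p \<and> (ccw_tournament x r)\<inverse>\<inverse> p q}"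
    using cross2_commute[of "q - x" "p - x" for q] by (auto simp: ccw_tournament_def)
qed (use assms in simp)

lemma cyclic_triangles_subset_triangles_containing:
  assumes "inj_on r P"
  shows "cyclic_triangles P (ccw_tournament x r) \<subseteq> triangles_containing P x"
proof
  let ?R = "ccw_tournament x r"
  have tournament: "?R p q \<or> ?R q p" if "p \<in> P" "q \<in> P" "p \<noteq> q" for p q
    using tournament_on_ccw_tournament[OF assms] that unfolding tournament_on_def by blast
  \<comment> \<open>A triangle oriented cyclically by \<open>?R\<close> winds around \<open>x\<close>; the ranking rules out the
    degenerate case where all three cross products vanish.\<close>
  have hull: "x \<in> convex hull {a, b, c}" if "?R a b" "?R b c" "?R c a" for a b c
  proof (rule in_convex_hull_if_cross2_nonneg)
    show nonneg:
      "0 \<le> cross2 (a - x) (b - x)" "0 \<le> cross2 (b - x) (c - x)" "0 \<le> cross2 (c - x) (a - x)"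
      using that by (auto simp: ccw_tournament_def)
    show "0 < cross2 (a - x) (b - x) + cross2 (b - x) (c - x) + cross2 (c - x) (a - x)"
    proof (rule ccontr)
      assume "\<not> ?thesis"
      with nonneg
      have "cross2 (a - x) (b - x) = 0" "cross2 (b - x) (c - x) = 0" "cross2 (c - x) (a - x) = 0"
        by linarith+
      with that have "r a < r b" "r b < r c" "r c < r a" by (auto simp: ccw_tournament_def)
      then show False by simp
    qed
  qed
  fix T assume "T \<in> cyclic_triangles P ?R"
  then have T: "T \<subseteq> P" "card T = 3" and no_source: "\<forall>s\<in>T. \<exists>q\<in>T - {s}. \<not> ?R s q"
    by (auto simp: cyclic_triangles_def)
  then obtain a b c where abc: "T = {a, b, c}" "a \<noteq> b" "b \<noteq> c" "a \<noteq> c"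
    by (metis card_3_iff)
  with T(1) have P: "a \<in> P" "b \<in> P" "c \<in> P" by auto
  have no_source': "\<not> (?R s q1 \<and> ?R s q2)" if "T = {s, q1, q2}" for s q1 q2
  proof
    assume "?R s q1 \<and> ?R s q2"
    with that have "\<forall>q\<in>T - {s}. ?R s q" by blast
    moreover have "s \<in> T" using that by blast
    ultimately show False using no_source by blast
  qed
  have perms: "T = {b, a, c}" "T = {c, a, b}" using abc(1) by auto
  have "x \<in> convex hull {a, b, c}"
  proof (cases "?R a b")
    case True
    with no_source'[OF abc(1)] tournament P abc(4) have "?R c a" by blast
    with no_source'[OF perms(2)] tournament P abc(3) have "?R b c" by blast
    with \<open>?R a b\<close> \<open>?R c a\<close> show ?thesis by (intro hull)
  next
    case False
    with tournament P abc(2) have "?R b a" by blast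
    with no_source'[OF perms(1)] tournament P abc(3) have "?R c b" by blast
    with no_source'[OF perms(2)] tournament P abc(4) have "?R a c" by blast
    with \<open>?R c b\<close> \<open>?R b a\<close> have "x \<in> convex hull {a, c, b}" by (intro hull)
    then show ?thesis by (simp add: insert_commute)
  qed
  then have "x \<in> convex hull T" using abc(1) by simp
  with T show "T \<in> triangles_containing P x" by (simp add: triangles_containing_def)
qed

lemma triangles_containing_subset_cyclic_triangles:
  assumes "\<forall>p\<in>P. \<forall>q\<in>P. p \<noteq> q \<longrightarrow> \<not> collinear {x, p, q}"
  shows "triangles_containing P x \<subseteq> cyclic_triangles P (ccw_tournament x r)"
proof
  fix T assume "T \<in> triangles_containing P x"
  then have T: "T \<subseteq> P" "card T = 3" "x \<in> convex hull T" by (auto simp: triangles_containing_def)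
  have "\<exists>q\<in>T - {s}. \<not> ccw_tournament x r s q" if s: "s \<in> T" for s
  proof (rule ccontr)
    assume "\<not> ?thesis"
    then have source: "\<forall>q\<in>T - {s}. ccw_tournament x r s q" by blast
    from s T(2) have "card (T - {s}) = 2" by simp
    then obtain q1 q2 where q: "T - {s} = {q1, q2}" by (auto simp: card_2_iff)
    then have "T = {s, q1, q2}" "s \<noteq> q1" "s \<noteq> q2" using s by auto
    moreover have "cross2 (s - x) (q - x) \<noteq> 0" if "q \<in> T" "q \<noteq> s" for q
      using assms[rule_format, of s q] T(1) s that collinear_if_cross2_eq_0[of s x q] by auto
    ultimately have "0 < cross2 (s - x) (q1 - x)" "0 < cross2 (s - x) (q2 - x)"
      using source unfolding ccw_tournament_def by auto
    then show False using not_in_convex_hull_if_cross2_pos T(3) \<open>T = {s, q1, q2}\<close> by blast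
  qed
  with T show "T \<in> cyclic_triangles P (ccw_tournament x r)" by (simp add: cyclic_triangles_def)
qed

theorem lemma16:
  fixes x :: "real^2" and L :: "(real^2) set set" and P :: "(real^2) set" and m :: nat
  assumes "m \<ge> 1"
    and "finite L" and "card L = m"
    and "\<forall>l\<in>L. line_through x l"
    and "P \<subseteq> - (\<Union>L)"
    and "\<forall>C\<in>components (- (\<Union>L)). card (P \<inter> C) = 1"
  shows "real (card (triangles_containing P x)) \<ge> real ((m + 1) * m * (m - 1)) / 3
    \<and> ((\<forall>p\<in>P. \<forall>q\<in>P. p \<noteq> q \<longrightarrow> \<not> collinear {x, p, q})
        \<longrightarrow> real (card (triangles_containing P x)) = real ((m + 1) * m * (m - 1)) / 3)"
proof -
  from assms(1-3) have "L \<noteq> {}" by auto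
  with assms(2,4) obtain dir where "central_arrangement x L dir"
    using central_arrangement_if_lines_through by blast
  then interpret central_arrangement x L dir .
  have P: "P \<subseteq> off_lines" "\<forall>C\<in>components off_lines. card (P \<inter> C) = 1"
    using assms(5,6) by (simp_all add: Compl_Union_lines)
  then have "card P = 2 * m" using card_sector_representatives assms(3) by blast
  with assms(1) have "finite P" by (simp add: card_ge_0_finite)
  then obtain r :: "real^2 \<Rightarrow> nat" where r: "inj_on r P"
    using finite_imp_inj_to_nat_seg by blast
  let ?R = "ccw_tournament x r"
  have "3 * card (cyclic_triangles P ?R) = (m + 1) * m * (m - 1)"
  proof (rule card_cyclic_triangles_almost_regular[OF \<open>finite P\<close> tournament_on_ccw_tournament[OF r]
        \<open>card P = 2 * m\<close>])
    fix p assume "p \<in> P"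
    then show "m - 1 \<le> out_degree P ?R p \<and> m - 1 \<le> out_degree P ?R\<inverse>\<inverse> p"
      using card_both_sides_of_representative_ge[OF P] assms(3)
        out_degree_ccw_tournament_ge[OF \<open>finite P\<close>, of p x r]
        in_degree_ccw_tournament_ge[OF \<open>finite P\<close>, of x p r]
      by fastforce
  qed
  moreover have "cyclic_triangles P ?R \<subseteq> triangles_containing P x"
    using cyclic_triangles_subset_triangles_containing[OF r] .
  moreover have "finite (triangles_containing P x)"
    using \<open>finite P\<close> by (auto simp: triangles_containing_def intro: finite_subset[of _ "Pow P"])
  ultimately show ?thesis
    using card_mono[of "triangles_containing P x" "cyclic_triangles P ?R"]
      triangles_containing_subset_cyclic_triangles[of P x r]
    by (auto simp: field_simps simp flip: of_nat_mult)
qed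

end
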